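(* Every Abel sequentially compact subset of $\mathbb{R}$ is $\delta$-ward compact.
   Context: A sequence $(p_n)_{n\ge0}$ is Abel convergent to $\ell$ if $\sum_{k=0}^{\infty}p_k x^k$ converges for every $0\le x<1$ and $\lim_{x\to 1^-}(1-x)\sum_{k=0}^{\infty}p_k x^k=\ell$. A subset $F\subseteq\mathbb{R}$ is Abel sequentially compact if every sequence of points of $F$ has a subsequence Abel convergent to a limit belonging to $F$. A sequence $(p_n)$ is $\delta$-quasi-Cauchy if $\lim_{n\to\infty}\big((p_{n+2}-p_{n+1})-(p_{n+1}-p_n)\big)=0$, i.e. the sequence of differences $(p_{n+1}-p_n)$ is quasi-Cauchy. A subset $E\subseteq\mathbb{R}$ is $\delta$-ward compact if every sequence of points of $E$ has a $\delta$-quasi-Cauchy subsequence. *)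

theory Defs
  imports "HOL-Analysis.Analysis"
begin

definition abel_convergent :: "(nat \<Rightarrow> real) \<Rightarrow> real \<Rightarrow> bool" where
  "abel_convergent p l \<longleftrightarrow>
     (\<forall>x. 0 \<le> x \<and> x < 1 \<longrightarrow> summable (\<lambda>k. p k * x ^ k)) \<and>
     ((\<lambda>x. (1 - x) * (\<Sum>k. p k * x ^ k)) \<longlongrightarrow> l) (at_left 1)"

definition abel_seq_compact :: "real set \<Rightarrow> bool" where
  "abel_seq_compact F \<longleftrightarrow>
     (\<forall>p. (\<forall>n. p n \<in> F) \<longrightarrow>
        (\<exists>(r::nat \<Rightarrow> nat) l. strict_mono r \<and> l \<in> F \<and> abel_convergent (p \<circ> r) l))"

definition delta_quasi_cauchy :: "(nat \<Rightarrow> real) \<Rightarrow> bool" where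
  "delta_quasi_cauchy p \<longleftrightarrow>
     (\<lambda>n. (p (n + 2) - p (n + 1)) - (p (n + 1) - p n)) \<longlonglongrightarrow> 0"

definition delta_ward_compact :: "real set \<Rightarrow> bool" where
  "delta_ward_compact E \<longleftrightarrow>
     (\<forall>p. (\<forall>n. p n \<in> E) \<longrightarrow>
        (\<exists>r::nat \<Rightarrow> nat. strict_mono r \<and> delta_quasi_cauchy (p \<circ> r)))"

end

theory Submission
  imports Defs
begin

text \<open>An Abel convergent sequence has a power series converging at \<open>x = 1/2\<close>, so its terms
  are eventually smaller than \<open>2^k\<close>. An unbounded set contains a sequence with \<open>2^n \<le> \<bar>p n\<bar>\<close>,
  and every subsequence of it grows at least as fast; hence Abel sequentially compact sets are
  bounded. By Bolzano--Weierstrass every sequence in a bounded set has a convergent subsequence,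
  and a convergent sequence is \<open>\<delta>\<close>-quasi-Cauchy since its second differences tend to
  \<open>(l - l) - (l - l) = 0\<close>.\<close>

lemma LIMSEQ_imp_delta_quasi_cauchy:
  assumes "X \<longlonglongrightarrow> l"
  shows "delta_quasi_cauchy X"
proof -
  have "(\<lambda>n. X (n + 1)) \<longlonglongrightarrow> l" "(\<lambda>n. X (n + 2)) \<longlonglongrightarrow> l"
    using assms by (rule LIMSEQ_ignore_initial_segment)+
  with assms have "(\<lambda>n. (X (n + 2) - X (n + 1)) - (X (n + 1) - X n)) \<longlonglongrightarrow> (l - l) - (l - l)"
    by (intro tendsto_intros)
  then show ?thesis
    unfolding delta_quasi_cauchy_def by simp
qed

lemma bounded_imp_delta_ward_compact:
  assumes "bounded E"
  shows "delta_ward_compact E"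
  unfolding delta_ward_compact_def
proof (intro allI impI)
  fix p :: "nat \<Rightarrow> real"
  assume "\<forall>n. p n \<in> E"
  with assms have "bounded (range p)"
    by (meson bounded_subset image_subset_iff)
  then obtain l and r :: "nat \<Rightarrow> nat" where "strict_mono r" "(p \<circ> r) \<longlonglongrightarrow> l"
    using bounded_imp_convergent_subsequence by blast
  then show "\<exists>r. strict_mono r \<and> delta_quasi_cauchy (p \<circ> r)"
    using LIMSEQ_imp_delta_quasi_cauchy by blast
qed

lemma abel_convergent_eventually_less_power:
  assumes "abel_convergent p l"
  shows "eventually (\<lambda>k. \<bar>p k\<bar> < 2 ^ k) sequentially"
proof -
  have "summable (\<lambda>k. p k * (1/2) ^ k)"
    using assms unfolding abel_convergent_def by auto
  then have "(\<lambda>k. p k * (1/2) ^ k) \<longlonglongrightarrow> 0"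
    by (rule summable_LIMSEQ_zero)
  then have "(\<lambda>k. \<bar>p k * (1/2) ^ k\<bar>) \<longlonglongrightarrow> 0"
    by (rule tendsto_rabs_zero)
  then have "eventually (\<lambda>k. \<bar>p k * (1/2) ^ k\<bar> < 1) sequentially"
    by (rule order_tendstoD(2)) simp
  then show ?thesis
    by (rule eventually_mono) (simp add: abs_mult power_one_over field_simps)
qed

lemma abel_seq_compact_imp_bounded:
  assumes "abel_seq_compact F"
  shows "bounded F"
proof (rule ccontr)
  assume "\<not> bounded F"
  then have "\<forall>n. \<exists>y\<in>F. 2 ^ n \<le> \<bar>y\<bar>"
    unfolding bounded_real by (meson linorder_not_le order_less_imp_le)
  then obtain p where p_in: "\<And>n. p n \<in> F" and p_large: "\<And>n. (2::real) ^ n \<le> \<bar>p n\<bar>"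
    by metis
  from assms p_in obtain r l where r: "strict_mono r" and "abel_convergent (p \<circ> r) l"
    unfolding abel_seq_compact_def by blast
  then obtain k where k: "\<bar>p (r k)\<bar> < 2 ^ k"
    using abel_convergent_eventually_less_power eventually_sequentially by fastforce
  have "(2::real) ^ k \<le> 2 ^ r k"
    using seq_suble[OF r] by simp
  also have "\<dots> \<le> \<bar>p (r k)\<bar>"
    by (rule p_large)
  finally show False
    using k by simp
qed

theorem corollary20:
  fixes F :: "real set"
  assumes "abel_seq_compact F"
  shows "delta_ward_compact F"
  using assms by (intro bounded_imp_delta_ward_compact abel_seq_compact_imp_bounded)

end
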